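(* Let $g\ge 3$ be an odd integer and let $m=\frac{g^2+1}{2}$. Let $C_m(\{g\};\{1\})$ be the mixed graph with vertex set $\{x_0,\dots,x_{m-1}\}$ (indices modulo $m$), arc set $\{(x_i,x_{i+g}) : 0\le i\le m-1\}$ and edge set $\{x_ix_{i+1} : 0\le i\le m-1\}$. Then $C_m(\{g\};\{1\})$ is a $[1,2;g]$-mixed graph of order $\frac{g^2+1}{2}$.
   Context: A mixed graph is a finite simple graph that may contain both edges and arcs. A $[z,r;g]$-mixed graph is a mixed graph in which every vertex is the tail of exactly $z$ arcs, the head of exactly $z$ arcs, and is incident with exactly $r$ edges, and whose girth is $g$. Walks traverse edges in either direction and arcs only in their direction; a cycle is a closed walk with no repeated vertices (other than start = end) and no repeated edge or arc; the girth is the length of a shortest cycle. *)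

theory Defs
  imports Main
begin

definition mixed_graph :: "'a set \<Rightarrow> 'a set set \<Rightarrow> ('a \<times> 'a) set \<Rightarrow> bool" where
  "mixed_graph V E A \<longleftrightarrow>
     finite V
   \<and> (\<forall>e\<in>E. \<exists>u v. e = {u, v} \<and> u \<noteq> v \<and> u \<in> V \<and> v \<in> V)
   \<and> (\<forall>(u, v)\<in>A. u \<noteq> v \<and> u \<in> V \<and> v \<in> V)
   \<and> (\<forall>(u, v)\<in>A. {u, v} \<notin> E)
   \<and> (\<forall>(u, v)\<in>A. (v, u) \<notin> A)"

datatype 'a link = Edge "'a set" | Arc 'a 'a

definition mixed_step :: "'a set set \<Rightarrow> ('a \<times> 'a) set \<Rightarrow> 'a \<Rightarrow> 'a link \<Rightarrow> 'a \<Rightarrow> bool" where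
  "mixed_step E A u l v \<longleftrightarrow> (l = Edge {u, v} \<and> {u, v} \<in> E) \<or> (l = Arc u v \<and> (u, v) \<in> A)"

definition mixed_cycle :: "'a set \<Rightarrow> 'a set set \<Rightarrow> ('a \<times> 'a) set \<Rightarrow> 'a list \<Rightarrow> 'a link list \<Rightarrow> bool" where
  "mixed_cycle V E A vs ls \<longleftrightarrow>
     length ls \<ge> 1
   \<and> length vs = length ls + 1
   \<and> set vs \<subseteq> V
   \<and> hd vs = last vs
   \<and> (\<forall>i < length ls. mixed_step E A (vs ! i) (ls ! i) (vs ! Suc i))
   \<and> distinct (butlast vs)
   \<and> distinct ls"

definition mixed_girth_eq :: "'a set \<Rightarrow> 'a set set \<Rightarrow> ('a \<times> 'a) set \<Rightarrow> nat \<Rightarrow> bool" where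
  "mixed_girth_eq V E A g \<longleftrightarrow>
     (\<exists>vs ls. mixed_cycle V E A vs ls \<and> length ls = g)
   \<and> (\<forall>vs ls. mixed_cycle V E A vs ls \<longrightarrow> g \<le> length ls)"

definition zrg_mixed_graph :: "'a set \<Rightarrow> 'a set set \<Rightarrow> ('a \<times> 'a) set \<Rightarrow> nat \<Rightarrow> nat \<Rightarrow> nat \<Rightarrow> bool" where
  "zrg_mixed_graph V E A z r g \<longleftrightarrow>
     mixed_graph V E A
   \<and> (\<forall>u\<in>V. card {v. (u, v) \<in> A} = z)
   \<and> (\<forall>u\<in>V. card {v. (v, u) \<in> A} = z)
   \<and> (\<forall>u\<in>V. card {e\<in>E. u \<in> e} = r)
   \<and> mixed_girth_eq V E A g"

text \<open>The mixed circulant C_m({a};{b}) on vertices 0..m-1 (indices mod m):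
arcs (i, i+a) and edges {i, i+b}.\<close>

definition circ_V :: "nat \<Rightarrow> nat set" where
  "circ_V m = {..<m}"

definition circ_A :: "nat \<Rightarrow> nat \<Rightarrow> (nat \<times> nat) set" where
  "circ_A m a = {(i, (i + a) mod m) | i. i < m}"

definition circ_E :: "nat \<Rightarrow> nat \<Rightarrow> nat set set" where
  "circ_E m b = {{i, (i + b) mod m} | i. i < m}"

end

theory Submission
  imports Defs
begin

text \<open>Write g = 2h + 1, so that m = 2h^2 + 2h + 1, and read the vertices as residues mod m.
Along a cycle every arc adds g and every edge adds \<plusminus>1, so a cycle of length k with p arcs
yields a relation p g + s \<equiv> 0 (mod m) with |s| + p \<le> k. For k < g this forces
0 < p g + s < 2m when p > 0, hence p g + s = m, and comparing with m = h g + h + 1 shows that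
no admissible p and s exist. So a short cycle uses edges only; since it cannot turn back,
it winds monotonically around the m-cycle and has length at least m > g. Conversely, h arcs
lead from 0 to h g, and h + 1 further edges close a cycle of length g at h g + h + 1 = m.\<close>

lemma add_mod_eq_if:
  fixes i a m :: nat
  assumes "i < m" "a < m"
  shows "(i + a) mod m = (if i + a < m then i + a else i + a - m)"
  using assms by (simp add: mod_if)

lemma Suc_mod_eq_if:
  fixes i m :: nat
  assumes "i < m"
  shows "Suc i mod m = (if Suc i = m then 0 else Suc i)"
  using assms by (simp add: mod_Suc)

lemma mixed_cycle_closed:
  assumes "mixed_cycle V E A vs ls"
  shows "vs ! length ls = vs ! 0"
proof -
  have "vs \<noteq> []" "length vs = Suc (length ls)" using assms unfolding mixed_cycle_def by auto
  then show ?thesis using assms unfolding mixed_cycle_def by (simp add: hd_conv_nth last_conv_nth)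
qed

lemma mixed_cycle_nth_in:
  assumes "mixed_cycle V E A vs ls" "i \<le> length ls"
  shows "vs ! i \<in> V"
  using assms unfolding mixed_cycle_def by (auto dest: nth_mem)

lemma mixed_cycle_nth_eq_iff:
  assumes "mixed_cycle V E A vs ls" "i < length ls" "j < length ls"
  shows "vs ! i = vs ! j \<longleftrightarrow> i = j"
proof -
  have "distinct (butlast vs)" "length (butlast vs) = length ls"
    using assms(1) unfolding mixed_cycle_def by auto
  then show ?thesis using assms(2,3) by (metis nth_butlast nth_eq_iff_index_eq)
qed

lemma mixed_cycle_nth_Suc_Suc_neq:
  assumes "mixed_cycle V E A vs ls" "3 \<le> length ls" "Suc (Suc i) \<le> length ls"
  shows "vs ! Suc (Suc i) \<noteq> vs ! i"
proof (cases "Suc (Suc i) = length ls")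
  case True
  then have "0 < i" "i < length ls" using assms(2) by auto
  then have "vs ! 0 \<noteq> vs ! i" using mixed_cycle_nth_eq_iff[OF assms(1), of 0 i] by force
  then show ?thesis using True mixed_cycle_closed[OF assms(1)] by simp
next
  case False
  then show ?thesis using assms mixed_cycle_nth_eq_iff[OF assms(1), of "Suc (Suc i)" i] by auto
qed

lemma mixed_cycle_length_ge_3:
  assumes G: "mixed_graph V E A" and C: "mixed_cycle V E A vs ls"
  shows "3 \<le> length ls"
proof -
  have step: "mixed_step E A (vs ! i) (ls ! i) (vs ! Suc i)" if "i < length ls" for i
    using C that unfolding mixed_cycle_def by auto
  have "length ls \<noteq> 1"
  proof
    assume "length ls = 1"
    then have "mixed_step E A (vs ! 0) (ls ! 0) (vs ! 0)"
      using step[of 0] mixed_cycle_closed[OF C] by simp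
    then show False using G unfolding mixed_graph_def mixed_step_def by fastforce
  qed
  moreover have "length ls \<noteq> 2"
  proof
    assume len: "length ls = 2"
    then have "ls ! 0 \<noteq> ls ! 1" using C unfolding mixed_cycle_def by (simp add: nth_eq_iff_index_eq)
    moreover have "mixed_step E A (vs ! 0) (ls ! 0) (vs ! 1)" "mixed_step E A (vs ! 1) (ls ! 1) (vs ! 0)"
      using step[of 0] step[of 1] mixed_cycle_closed[OF C] len by (simp_all add: numeral_2_eq_2)
    ultimately show False using G unfolding mixed_graph_def mixed_step_def by (auto simp: insert_commute)
  qed
  moreover have "1 \<le> length ls" using C unfolding mixed_cycle_def by simp
  ultimately show ?thesis by linarith
qed

lemma circ_A_iff: "(u, v) \<in> circ_A m a \<longleftrightarrow> u < m \<and> v = (u + a) mod m"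
  unfolding circ_A_def by auto

lemma circ_E_eq_image: "circ_E m b = (\<lambda>i. {i, (i + b) mod m}) ` {..<m}"
  unfolding circ_E_def by auto

lemma inj_on_circ_edge:
  fixes m :: nat
  assumes "3 \<le> m"
  shows "inj_on (\<lambda>i. {i, (i + 1) mod m}) {..<m}"
proof (rule inj_onI)
  fix i j assume "i \<in> {..<m}" "j \<in> {..<m}" "{i, (i + 1) mod m} = {j, (j + 1) mod m}"
  then show "i = j" using assms by (auto simp: doubleton_eq_iff Suc_mod_eq_if split: if_splits)
qed

lemma mixed_graph_circ:
  assumes "1 < a" "a + 1 < m" "2 * a \<noteq> m"
  shows "mixed_graph (circ_V m) (circ_E m 1) (circ_A m a)"
proof -
  have "1 < m" using assms by simp
  then have edge_proper: "(i + 1) mod m \<noteq> i" if "i < m" for i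
    using that by (simp add: Suc_mod_eq_if)
  have arc_proper: "(u + a) mod m \<noteq> u" if "u < m" for u
    using that assms by (auto simp: add_mod_eq_if)
  have arc_not_edge: "{u, (u + a) mod m} \<noteq> {i, (i + 1) mod m}" if "u < m" "i < m" for u i
    using that assms \<open>1 < m\<close> by (auto simp: doubleton_eq_iff add_mod_eq_if Suc_mod_eq_if)
  have arc_not_reversible: "((u + a) mod m + a) mod m \<noteq> u" if "u < m" for u
  proof
    assume "((u + a) mod m + a) mod m = u"
    then have "(u + 2 * a) mod m = u mod m" using that by (simp add: mod_add_left_eq add.assoc mult_2)
    then have "m dvd 2 * a" by (simp add: mod_eq_dvd_iff_nat)
    then obtain k where k: "2 * a = m * k" by blast
    then have "m * k < m * 2" using assms unfolding k[symmetric] by simp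
    then have "k = 1" using k assms by (cases k) auto
    then show False using k assms by simp
  qed
  show ?thesis
    unfolding mixed_graph_def circ_V_def circ_E_eq_image
    using edge_proper arc_proper arc_not_edge arc_not_reversible by (fastforce simp: circ_A_iff)
qed

lemma circ_A_out_degree: "u < m \<Longrightarrow> card {v. (u, v) \<in> circ_A m a} = 1"
  by (simp add: circ_A_iff)

lemma circ_A_in_degree:
  assumes "a < m" "u < m"
  shows "card {v. (v, u) \<in> circ_A m a} = 1"
proof -
  have "(v, u) \<in> circ_A m a \<longleftrightarrow> v = (if a \<le> u then u - a else u + m - a)" for v
    using assms by (cases "v < m") (auto simp: circ_A_iff add_mod_eq_if)
  then have "{v. (v, u) \<in> circ_A m a} = {if a \<le> u then u - a else u + m - a}"
    by blast
  then show ?thesis by simp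
qed

lemma circ_E_degree:
  fixes m :: nat
  assumes "3 \<le> m" "u < m"
  shows "card {e \<in> circ_E m 1. u \<in> e} = 2"
proof -
  let ?edge = "\<lambda>i. {i, (i + 1) mod m}" and ?pred = "if u = 0 then m - 1 else u - 1"
  have "u \<in> ?edge i \<longleftrightarrow> i = u \<or> i = ?pred" if "i < m" for i
    using that assms by (auto simp: Suc_mod_eq_if)
  moreover have "?pred < m" using assms by auto
  ultimately have "{i \<in> {..<m}. u \<in> ?edge i} = {u, ?pred}"
    using assms(2) by blast
  then have "{e \<in> circ_E m 1. u \<in> e} = ?edge ` {u, ?pred}"
    unfolding circ_E_eq_image by blast
  moreover have "inj_on ?edge {u, ?pred}"
    using inj_on_circ_edge[OF assms(1)] by (rule inj_on_subset) (use assms in auto)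
  moreover have "u \<noteq> ?pred" using assms by auto
  ultimately show ?thesis by (simp add: card_image)
qed

lemma mod_add_sum_of_steps:
  fixes x d :: "nat \<Rightarrow> int"
  assumes "\<And>i. i < k \<Longrightarrow> x (Suc i) = (x i + d i) mod n"
  shows "x k mod n = (x 0 + (\<Sum>i<k. d i)) mod n"
  using assms
proof (induction k)
  case (Suc k)
  have IH: "x k mod n = (x 0 + (\<Sum>i<k. d i)) mod n" using Suc by simp
  have "x (Suc k) mod n = (x k mod n + d k) mod n" using Suc.prems by (simp add: mod_add_left_eq)
  also have "\<dots> = ((x 0 + (\<Sum>i<k. d i)) mod n + d k) mod n" by (simp only: IH)
  also have "\<dots> = (x 0 + (\<Sum>i<Suc k. d i)) mod n" by (simp add: mod_add_left_eq add.assoc)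
  finally show ?case .
qed simp

lemma circ_step_displacement:
  assumes "mixed_step (circ_E m 1) (circ_A m a) u l v"
  shows "\<exists>d. int v = (int u + d) mod int m \<and> (case l of Edge _ \<Rightarrow> \<bar>d\<bar> = 1 | Arc _ _ \<Rightarrow> d = int a)"
  using assms unfolding mixed_step_def
proof (elim disjE conjE)
  assume "l = Edge {u, v}" "{u, v} \<in> circ_E m 1"
  then obtain i where i: "i < m" "{u, v} = {i, (i + 1) mod m}" unfolding circ_E_def by blast
  then consider "u = i" "v = (i + 1) mod m" | "v = i" "u = (i + 1) mod m"
    by (auto simp: doubleton_eq_iff)
  then show ?thesis
  proof cases
    case 1
    then have "int v = (int u + 1) mod int m" by (simp add: zmod_int add.commute)
    then show ?thesis using \<open>l = Edge {u, v}\<close> by (intro exI[of _ 1]) simp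
  next
    case 2
    then have "(int u - 1) mod int m = int v" using i by (simp add: zmod_int mod_diff_left_eq)
    then show ?thesis using \<open>l = Edge {u, v}\<close> by (intro exI[of _ "-1"]) simp
  qed
next
  assume "l = Arc u v" "(u, v) \<in> circ_A m a"
  then show ?thesis by (intro exI[of _ "int a"]) (simp add: circ_A_iff zmod_int)
qed

lemma circ_cycle_displacements:
  assumes C: "mixed_cycle (circ_V m) (circ_E m 1) (circ_A m a) vs ls"
  obtains d where "\<And>i. i < length ls \<Longrightarrow> int (vs ! Suc i) = (int (vs ! i) + d i) mod int m"
    and "\<And>i. i < length ls \<Longrightarrow> (case ls ! i of Edge _ \<Rightarrow> \<bar>d i\<bar> = 1 | Arc _ _ \<Rightarrow> d i = int a)"
    and "int m dvd (\<Sum>i<length ls. d i)"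
proof -
  have "\<forall>i. \<exists>d. i < length ls \<longrightarrow> int (vs ! Suc i) = (int (vs ! i) + d) mod int m
      \<and> (case ls ! i of Edge _ \<Rightarrow> \<bar>d\<bar> = 1 | Arc _ _ \<Rightarrow> d = int a)"
    using C circ_step_displacement unfolding mixed_cycle_def by blast
  then obtain d where d: "\<And>i. i < length ls \<Longrightarrow> int (vs ! Suc i) = (int (vs ! i) + d i) mod int m
      \<and> (case ls ! i of Edge _ \<Rightarrow> \<bar>d i\<bar> = 1 | Arc _ _ \<Rightarrow> d i = int a)"
    by metis
  have "int (vs ! 0) mod int m = (int (vs ! 0) + (\<Sum>i<length ls. d i)) mod int m"
    using mod_add_sum_of_steps[of "length ls" "\<lambda>i. int (vs ! i)" d "int m"] d
      mixed_cycle_closed[OF C] by simp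
  then have "int m dvd (\<Sum>i<length ls. d i)" by (simp add: mod_eq_dvd_iff)
  with d that show ?thesis by blast
qed

lemma circ_cycle_without_arcs:
  assumes C: "mixed_cycle (circ_V m) (circ_E m 1) (circ_A m a) vs ls"
    and len: "3 \<le> length ls" and edges: "\<forall>i<length ls. \<exists>e. ls ! i = Edge e"
  shows "m \<le> length ls"
proof -
  let ?k = "length ls"
  obtain d where step: "\<And>i. i < ?k \<Longrightarrow> int (vs ! Suc i) = (int (vs ! i) + d i) mod int m"
    and kind: "\<And>i. i < ?k \<Longrightarrow> (case ls ! i of Edge _ \<Rightarrow> \<bar>d i\<bar> = 1 | Arc _ _ \<Rightarrow> d i = int a)"
    and dvd: "int m dvd (\<Sum>i<?k. d i)"
    using circ_cycle_displacements[OF C] by blast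
  have unit: "\<bar>d i\<bar> = 1" if "i < ?k" for i
    using kind[OF that] edges that by auto
  have "d (Suc i) = d i" if i: "Suc i < ?k" for i
  proof (rule ccontr)
    assume "d (Suc i) \<noteq> d i"
    then have cancel: "d i + d (Suc i) = 0" using unit[of i] unit[of "Suc i"] i by auto
    have "vs ! i < m" using mixed_cycle_nth_in[OF C, of i] i by (simp add: circ_V_def)
    have "int (vs ! Suc (Suc i)) = ((int (vs ! i) + d i) mod int m + d (Suc i)) mod int m"
      using step[of i] step[of "Suc i"] i by simp
    also have "\<dots> = (int (vs ! i) + (d i + d (Suc i))) mod int m"
      by (simp add: mod_add_left_eq add.assoc)
    also have "\<dots> = int (vs ! i)" using cancel \<open>vs ! i < m\<close> by simp
    finally show False using mixed_cycle_nth_Suc_Suc_neq[OF C len, of i] i by simp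
  qed
  then have const: "d i = d 0" if "i < ?k" for i
    using that by (induction i) auto
  have "\<bar>d 0\<bar> = 1" using len by (intro unit) linarith
  then have "d 0 = 1 \<or> d 0 = -1" by linarith
  moreover have "(\<Sum>i<?k. d i) = int ?k * d 0" using const by simp
  ultimately have "int m dvd int ?k" using dvd by auto
  then show ?thesis using len by (intro dvd_imp_le) auto
qed

lemma circ_cycle_arc_relation:
  assumes C: "mixed_cycle (circ_V m) (circ_E m 1) (circ_A m a) vs ls"
  obtains p :: nat and s :: int
  where "int m dvd int p * int a + s" and "\<bar>s\<bar> + int p \<le> int (length ls)"
    and "p = 0 \<Longrightarrow> \<forall>i<length ls. \<exists>e. ls ! i = Edge e"
proof -
  let ?k = "length ls" and ?is_arc = "{i. \<exists>x y. ls ! i = Arc x y}"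
  let ?arcs = "{..<?k} \<inter> ?is_arc" and ?edges = "{..<?k} - ?is_arc"
  obtain d where kind: "\<And>i. i < ?k \<Longrightarrow> (case ls ! i of Edge _ \<Rightarrow> \<bar>d i\<bar> = 1 | Arc _ _ \<Rightarrow> d i = int a)"
    and dvd: "int m dvd (\<Sum>i<?k. d i)"
    using circ_cycle_displacements[OF C] by blast
  have "(\<Sum>i\<in>?arcs. d i) = (\<Sum>i\<in>?arcs. int a)"
    by (rule sum.cong) (auto dest: kind)
  then have "(\<Sum>i<?k. d i) = int (card ?arcs) * int a + (\<Sum>i\<in>?edges. d i)"
    using sum.Int_Diff[of "{..<?k}" d ?is_arc] by simp
  then have dvd': "int m dvd int (card ?arcs) * int a + (\<Sum>i\<in>?edges. d i)"
    using dvd by simp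
  have "\<bar>\<Sum>i\<in>?edges. d i\<bar> \<le> (\<Sum>i\<in>?edges. \<bar>d i\<bar>)" by (rule sum_abs)
  also have "\<dots> = (\<Sum>i\<in>?edges. 1)"
    by (rule sum.cong) (auto dest: kind split: link.splits)
  finally have "\<bar>\<Sum>i\<in>?edges. d i\<bar> + int (card ?arcs) \<le> int ?k"
    using card_Int_Diff[of "{..<?k}" ?is_arc] by simp
  moreover have "\<forall>i<?k. \<exists>e. ls ! i = Edge e" if "card ?arcs = 0"
  proof (intro allI impI)
    fix i assume "i < ?k"
    then have "i \<notin> ?is_arc" using that by auto
    then show "\<exists>e. ls ! i = Edge e" by (cases "ls ! i") auto
  qed
  ultimately show ?thesis using dvd' by (intro that) auto
qed

lemma short_relation_trivial:
  fixes h p s :: int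
  assumes h: "1 \<le> h" and p: "0 \<le> p" and short: "\<bar>s\<bar> + p \<le> 2 * h"
    and dvd: "2 * h^2 + 2 * h + 1 dvd p * (2 * h + 1) + s"
  shows "p = 0"
proof (rule ccontr)
  assume "p \<noteq> 0"
  define M where "M = 2 * h^2 + 2 * h + 1"
  obtain t where t: "p * (2 * h + 1) + s = M * t" using dvd unfolding M_def by blast
  have "1 \<le> p" using \<open>p \<noteq> 0\<close> p by simp
  have s_bounds: "- \<bar>s\<bar> \<le> s" "s \<le> \<bar>s\<bar>" by simp_all
  have "1 * (2 * h + 1) \<le> p * (2 * h + 1)" using \<open>1 \<le> p\<close> h by (intro mult_right_mono) auto
  then have lower: "0 < M * t" using t short s_bounds \<open>1 \<le> p\<close> by (smt (verit))
  have "p * h \<le> 2 * (h * h)"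
    using mult_right_mono[of p "2 * h" h] short h by (simp add: mult.assoc)
  moreover have "M * t = 2 * (p * h) + p + s" using t by (simp add: algebra_simps)
  moreover have "M * 2 = 4 * (h * h) + 4 * h + 2" unfolding M_def power2_eq_square by simp
  ultimately have upper: "M * t < M * 2" using short s_bounds h by (smt (verit))
  have "0 < M" using h unfolding M_def by simp
  then have "0 < t" "t < 2"
    using lower upper zero_less_mult_pos mult_less_cancel_left_pos by blast+
  then have "t = 1" by simp
  \<comment> \<open>since M = h (2h + 1) + h + 1\<close>
  then have key: "(p - h) * (2 * h + 1) = h + 1 - s"
    using t unfolding M_def power2_eq_square by (simp add: algebra_simps)
  consider "p \<le> h - 1" | "p = h" | "h + 1 \<le> p" by linarith
  then show False
  proof cases
    case 1
    then have "(p - h) * (2 * h + 1) \<le> -1 * (2 * h + 1)" using h by (intro mult_right_mono) auto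
    then show False using key short s_bounds p h by (smt (verit))
  next
    case 2
    then show False using key short s_bounds by simp
  next
    case 3
    then have "1 * (2 * h + 1) \<le> (p - h) * (2 * h + 1)" using h by (intro mult_right_mono) auto
    then show False using key short s_bounds 3 by (smt (verit))
  qed
qed

lemma circ_cycle_of_length_g:
  fixes h g m :: nat
  assumes h: "1 \<le> h" and g: "g = 2 * h + 1" and m: "m = 2 * h^2 + 2 * h + 1"
  shows "\<exists>vs ls. mixed_cycle (circ_V m) (circ_E m 1) (circ_A m g) vs ls \<and> length ls = g"
proof -
  define pos where "pos j = (if j \<le> h then j * g else h * g + (j - h))" for j
  define link where
    "link j = (if j < h then Arc (pos j) (pos (Suc j)) else Edge {pos j, pos (Suc j) mod m})" for j
  let ?vs = "map (\<lambda>j. pos j mod m) [0..<Suc g]" and ?ls = "map link [0..<g]"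
  have m_eq: "m = h * g + h + 1" using g m by (simp add: power2_eq_square algebra_simps)
  have "pos j < pos (Suc j)" for j
    using g by (cases "j < h"; cases "j = h") (auto simp: pos_def)
  then have "strict_mono pos" by (simp add: strict_mono_Suc_iff)
  then have inj_pos: "inj pos" by (rule strict_mono_imp_inj_on)
  have pos_lt: "pos j < m" if "j < g" for j
  proof (cases "j \<le> h")
    case True
    then have "pos j \<le> h * g" unfolding pos_def by simp
    then show ?thesis using m_eq by linarith
  next
    case False
    then show ?thesis using that g m_eq unfolding pos_def by simp
  qed
  have pos_g: "pos g = m" using g m_eq unfolding pos_def by simp
  have arc_step: "pos (Suc j) = pos j + g" if "j < h" for j
    using that unfolding pos_def by simp
  have edge_step: "pos (Suc j) = Suc (pos j)" if "h \<le> j" for j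
    using that unfolding pos_def by auto
  have vs_nth: "?vs ! j = pos j mod m" if "j \<le> g" for j
    using that by (simp del: upt_Suc add: nth_map_upt)
  have steps: "mixed_step (circ_E m 1) (circ_A m g) (?vs ! j) (?ls ! j) (?vs ! Suc j)" if "j < g" for j
  proof (cases "j < h")
    case True
    then have "pos (Suc j) < m" using pos_lt g by simp
    then show ?thesis
      using True that pos_lt[OF that] arc_step[OF True] vs_nth[of j] vs_nth[of "Suc j"]
      unfolding mixed_step_def link_def by (simp add: circ_A_iff)
  next
    case False
    then show ?thesis
      using that pos_lt[OF that] edge_step[of j] vs_nth[of j] vs_nth[of "Suc j"]
      unfolding mixed_step_def link_def circ_E_def by auto
  qed
  have butlast_vs: "butlast ?vs = map pos [0..<g]" using pos_lt by simp
  have "distinct (butlast ?vs)"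
    unfolding butlast_vs using inj_pos by (simp add: distinct_map inj_on_subset[of _ UNIV])
  moreover have "inj_on link {0..<g}"
  proof (rule inj_onI)
    fix i j assume i: "i \<in> {0..<g}" and j: "j \<in> {0..<g}" and eq: "link i = link j"
    have "pos i = pos j"
    proof (cases "i < h")
      case True
      then show ?thesis using eq unfolding link_def by (auto split: if_splits)
    next
      case False
      then have "\<not> j < h" using eq unfolding link_def by (auto split: if_splits)
      then have "{pos i, (pos i + 1) mod m} = {pos j, (pos j + 1) mod m}"
        using eq False edge_step unfolding link_def by simp
      moreover have "3 \<le> m" using m h by simp
      ultimately show ?thesis
        using inj_on_circ_edge pos_lt i j by (auto simp: inj_on_def)
    qed
    then show "i = j" using inj_pos by (simp add: inj_eq)
  qed
  then have "distinct ?ls" by (simp add: distinct_map)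
  moreover have "set ?vs \<subseteq> circ_V m" using m by (auto simp: circ_V_def)
  moreover have "hd ?vs = last ?vs"
  proof -
    have "hd ?vs = pos 0 mod m" by (simp del: upt_Suc add: upt_conv_Cons)
    then show ?thesis using pos_g by (simp add: pos_def)
  qed
  ultimately have "mixed_cycle (circ_V m) (circ_E m 1) (circ_A m g) ?vs ?ls"
    unfolding mixed_cycle_def using steps g by auto
  then show ?thesis by (intro exI[of _ ?vs] exI[of _ ?ls]) simp
qed

lemma mixed_graph_circ_odd:
  fixes h g m :: nat
  assumes h: "1 \<le> h" and g: "g = 2 * h + 1" and m: "m = 2 * h^2 + 2 * h + 1"
  shows "mixed_graph (circ_V m) (circ_E m 1) (circ_A m g)"
proof (rule mixed_graph_circ)
  have "h \<le> h * h" using h by simp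
  then show "1 < g" "g + 1 < m" using h g m unfolding power2_eq_square by linarith+
  have "odd m" using m by simp
  then show "2 * g \<noteq> m" by auto
qed

lemma mixed_girth_eq_circ_odd:
  fixes h g m :: nat
  assumes h: "1 \<le> h" and g: "g = 2 * h + 1" and m: "m = 2 * h^2 + 2 * h + 1"
  shows "mixed_girth_eq (circ_V m) (circ_E m 1) (circ_A m g) g"
proof -
  have G: "mixed_graph (circ_V m) (circ_E m 1) (circ_A m g)" using h g m by (rule mixed_graph_circ_odd)
  have "g \<le> length ls" if C: "mixed_cycle (circ_V m) (circ_E m 1) (circ_A m g) vs ls" for vs ls
  proof (rule ccontr)
    assume short: "\<not> g \<le> length ls"
    obtain p s where dvd: "int m dvd int p * int g + s" and bound: "\<bar>s\<bar> + int p \<le> int (length ls)"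
      and edges: "p = 0 \<Longrightarrow> \<forall>i<length ls. \<exists>e. ls ! i = Edge e"
      using circ_cycle_arc_relation[OF C] by blast
    have "int m = 2 * (int h)^2 + 2 * int h + 1" "int g = 2 * int h + 1" using g m by simp_all
    then have "2 * (int h)^2 + 2 * int h + 1 dvd int p * (2 * int h + 1) + s" using dvd by simp
    moreover have "\<bar>s\<bar> + int p \<le> 2 * int h" using bound short g by simp
    ultimately have "int p = 0" using h by (intro short_relation_trivial) simp_all
    then have "m \<le> length ls"
      using circ_cycle_without_arcs[OF C mixed_cycle_length_ge_3[OF G C]] edges by simp
    then show False using short g m h by (simp add: power2_eq_square)
  qed
  then show ?thesis unfolding mixed_girth_eq_def using circ_cycle_of_length_g[OF h g m] by blast
qed

theorem lemma5:
  fixes g m :: nat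
  assumes "odd g" and "g \<ge> 3" and "m = (g ^ 2 + 1) div 2"
  shows "zrg_mixed_graph (circ_V m) (circ_E m 1) (circ_A m g) 1 2 g
         \<and> card (circ_V m) = (g ^ 2 + 1) div 2"
proof -
  obtain h where g: "g = 2 * h + 1" using \<open>odd g\<close> by (rule oddE)
  then have h: "1 \<le> h" using \<open>g \<ge> 3\<close> by simp
  have m: "m = 2 * h^2 + 2 * h + 1" using assms(3) g by (simp add: power2_eq_square algebra_simps)
  then have "3 \<le> m" "g < m" using h g by (simp_all add: power2_eq_square)
  then have "zrg_mixed_graph (circ_V m) (circ_E m 1) (circ_A m g) 1 2 g"
    unfolding zrg_mixed_graph_def
    using mixed_graph_circ_odd[OF h g m] mixed_girth_eq_circ_odd[OF h g m] circ_E_degree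
    by (auto simp: circ_V_def circ_A_out_degree circ_A_in_degree)
  then show ?thesis using assms(3) by (simp add: circ_V_def)
qed

end
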